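(* If $A$ is a bounded self-adjoint operator on $L^2(\mu)$, then $\|LA-AL\|=\|KA-AK\|$. In particular, if $\psi\in L^2(\mu)$ has $|\psi|=1$ and $\hat\psi$ is the projection $\phi\mapsto\langle\phi,\psi\rangle\psi$, then $\|L\hat\psi-\hat\psi L\|=\|K\hat\psi-\hat\psi K\|$, and $$\big\|[\mathcal D,\pi(\hat\psi)]\big\|=\max\{\|K\hat\psi-\hat\psi K\|,\|L\hat\psi-\hat\psi L\|\}=\|K\hat\psi-\hat\psi K\|.$$
   Context: $\Omega=\{0,1\}^{\mathbb N}$ with the shift $\sigma$; for $a\in\{0,1\}$, $ax=(a,x_1,x_2,\dots)$. $\mu$ is the measure of maximal entropy of $\sigma$ (uniform Bernoulli product measure). $L^2(\mu)$ has inner product $\langle\cdot,\cdot\rangle$ and norm $|\cdot|$. Ruelle operator: $L\phi(x)=\frac12(\phi(0x)+\phi(1x))$; Koopman operator: $K\phi=\phi\circ\sigma$; $K$ is the adjoint of $L$. On $\mathcal H=L^2(\mu)\times L^2(\mu)$ (norm $|(\phi_1,\phi_2)|^2=|\phi_1|^2+|\phi_2|^2$) let $\mathcal D=\begin{pmatrix}0&K\\ L&0\end{pmatrix}$ and, for bounded $A$ on $L^2(\mu)$, $\pi(A)=\begin{pmatrix}A&0\\0&A\end{pmatrix}$, so $[\mathcal D,\pi(A)]=\begin{pmatrix}0&KA-AK\\ LA-AL&0\end{pmatrix}$. $\|\cdot\|$ is the operator norm. *)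

theory Defs
  imports "HOL-Probability.Probability"
begin

text \<open>Omega = {0,1}^N is modelled as nat => bool (False = 0, True = 1, index 0 = first
coordinate). L^2(mu) (complex) is modelled by representatives: square-integrable
measurable functions; operators act on representatives and are linear up to mu-a.e.
equality.\<close>

type_synonym fn = "(nat \<Rightarrow> bool) \<Rightarrow> complex"

definition mu :: "(nat \<Rightarrow> bool) measure" where
  "mu = PiM UNIV (\<lambda>_::nat. measure_pmf (bernoulli_pmf (1/2)))"

definition L2 :: "fn set" where
  "L2 = {f. f \<in> borel_measurable mu \<and> integrable mu (\<lambda>x. (cmod (f x))^2)}"

definition inner2 :: "fn \<Rightarrow> fn \<Rightarrow> complex" where
  "inner2 f g = (LINT x|mu. f x * cnj (g x))"

definition norm2 :: "fn \<Rightarrow> real" where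
  "norm2 f = sqrt (LINT x|mu. (cmod (f x))^2)"

definition shift :: "(nat \<Rightarrow> bool) \<Rightarrow> (nat \<Rightarrow> bool)" where
  "shift x = (\<lambda>n. x (Suc n))"

definition prep :: "bool \<Rightarrow> (nat \<Rightarrow> bool) \<Rightarrow> (nat \<Rightarrow> bool)" where
  "prep a x = case_nat a x"

definition ruelle :: "fn \<Rightarrow> fn" where
  "ruelle \<phi> = (\<lambda>x. (\<phi> (prep False x) + \<phi> (prep True x)) / 2)"

definition koopman :: "fn \<Rightarrow> fn" where
  "koopman \<phi> = (\<lambda>x. \<phi> (shift x))"

definition bounded_op :: "(fn \<Rightarrow> fn) \<Rightarrow> bool" where
  "bounded_op A \<longleftrightarrow>
     (\<forall>f\<in>L2. A f \<in> L2) \<and>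
     (\<forall>f\<in>L2. \<forall>g\<in>L2. AE x in mu. A (\<lambda>y. f y + g y) x = A f x + A g x) \<and>
     (\<forall>f\<in>L2. \<forall>c. AE x in mu. A (\<lambda>y. c * f y) x = c * A f x) \<and>
     (\<exists>C. \<forall>f\<in>L2. norm2 (A f) \<le> C * norm2 f)"

definition self_adjoint :: "(fn \<Rightarrow> fn) \<Rightarrow> bool" where
  "self_adjoint A \<longleftrightarrow> (\<forall>f\<in>L2. \<forall>g\<in>L2. inner2 (A f) g = inner2 f (A g))"

definition opnorm :: "(fn \<Rightarrow> fn) \<Rightarrow> real" where
  "opnorm T = Sup {norm2 (T f) | f. f \<in> L2 \<and> norm2 f \<le> 1}"

definition comm :: "(fn \<Rightarrow> fn) \<Rightarrow> (fn \<Rightarrow> fn) \<Rightarrow> (fn \<Rightarrow> fn)" where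
  "comm T A = (\<lambda>f x. T (A f) x - A (T f) x)"

definition proj :: "fn \<Rightarrow> (fn \<Rightarrow> fn)" where
  "proj \<psi> = (\<lambda>f x. inner2 f \<psi> * \<psi> x)"

definition normH :: "fn \<times> fn \<Rightarrow> real" where
  "normH p = sqrt ((norm2 (fst p))^2 + (norm2 (snd p))^2)"

definition opnormH :: "(fn \<times> fn \<Rightarrow> fn \<times> fn) \<Rightarrow> real" where
  "opnormH S = Sup {normH (S p) | p. fst p \<in> L2 \<and> snd p \<in> L2 \<and> normH p \<le> 1}"

definition dirac :: "fn \<times> fn \<Rightarrow> fn \<times> fn" where
  "dirac p = (koopman (snd p), ruelle (fst p))"

definition piop :: "(fn \<Rightarrow> fn) \<Rightarrow> fn \<times> fn \<Rightarrow> fn \<times> fn" where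
  "piop A p = (A (fst p), A (snd p))"

definition commH :: "(fn \<times> fn \<Rightarrow> fn \<times> fn) \<Rightarrow> (fn \<times> fn \<Rightarrow> fn \<times> fn) \<Rightarrow> (fn \<times> fn \<Rightarrow> fn \<times> fn)" where
  "commH S P = (\<lambda>p. ((\<lambda>x. fst (S (P p)) x - fst (P (S p)) x),
                      (\<lambda>x. snd (S (P p)) x - snd (P (S p)) x)))"

end

theory Submission
  imports Defs
begin

text \<open>Splitting \<open>\<mu>\<close> over the first coordinate gives \<open>\<langle>L u, v\<rangle> = \<langle>u, K v\<rangle>\<close>, so for
  self-adjoint \<open>A\<close> one gets \<open>\<langle>[L,A] f, g\<rangle> = - \<langle>f, [K,A] g\<rangle>\<close>: the commutator \<open>[L,A]\<close> is
  \<open>-[K,A]\<^sup>*\<close>. An operator and its adjoint have the same norm, since pairing \<open>[L,A] f\<close> with its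
  own normalisation \<open>g\<close> gives \<open>|[L,A] f| = |\<langle>f, [K,A] g\<rangle>| \<le> |f| |[K,A] g|\<close>, and symmetrically. The commutator \<open>[D, \<pi>(A)]\<close> maps
  \<open>(\<phi>\<^sub>1, \<phi>\<^sub>2)\<close> to \<open>([K,A] \<phi>\<^sub>2, [L,A] \<phi>\<^sub>1)\<close>; both blocks have the same norm \<open>N\<close>, which is finite
  for bounded \<open>A\<close> such as a rank-one projection, and then the block operator has norm \<open>N\<close>.\<close>

section \<open>The coin-tossing measure\<close>

abbreviation coin :: "bool measure" where
  "coin \<equiv> measure_pmf (bernoulli_pmf (1/2))"

lemma prob_space_mu: "prob_space mu"
  unfolding mu_def by (rule prob_space_PiM) (simp add: prob_space_measure_pmf)

lemma prep_measurable [measurable]: "prep a \<in> mu \<rightarrow>\<^sub>M mu"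
  unfolding prep_def mu_def by measurable

lemma shift_measurable [measurable]: "shift \<in> mu \<rightarrow>\<^sub>M mu"
  unfolding shift_def mu_def by (rule measurable_PiM_single') (auto simp: space_PiM)

lemma case_nat_measurable [measurable]:
  "(\<lambda>(s, \<omega>). case_nat s \<omega>) \<in> coin \<Otimes>\<^sub>M mu \<rightarrow>\<^sub>M mu"
  unfolding mu_def by measurable

lemma shift_prep [simp]: "shift (prep a x) = x"
  by (simp add: shift_def prep_def)

lemma distr_case_nat_mu: "distr (coin \<Otimes>\<^sub>M mu) mu (\<lambda>(s, \<omega>). case_nat s \<omega>) = mu"
proof -
  interpret sequence_space coin by unfold_locales
  show ?thesis unfolding mu_def by (rule PiM_iter)
qed

lemma pair_sigma_finite_coin_mu: "pair_sigma_finite coin mu"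
  using prob_space_mu
  by (simp add: pair_sigma_finite_def prob_space_imp_sigma_finite prob_space_measure_pmf)

lemma nn_integral_mu_split:
  assumes [measurable]: "f \<in> borel_measurable mu"
  shows "(\<integral>\<^sup>+y. f y \<partial>mu) = (\<integral>\<^sup>+x. (f (prep False x) + f (prep True x)) / 2 \<partial>mu)"
proof -
  interpret pair_sigma_finite coin mu by (rule pair_sigma_finite_coin_mu)
  have "(\<integral>\<^sup>+y. f y \<partial>mu) = (\<integral>\<^sup>+p. f (case_nat (fst p) (snd p)) \<partial>(coin \<Otimes>\<^sub>M mu))"
    by (subst (1) distr_case_nat_mu[symmetric], subst nn_integral_distr) (auto simp: split_beta')
  also have "\<dots> = (\<integral>\<^sup>+x. \<integral>\<^sup>+s. f (case_nat s x) \<partial>coin \<partial>mu)"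
    by (subst nn_integral_snd[symmetric]) (auto simp: split_beta')
  also have "\<dots> = (\<integral>\<^sup>+x. (f (prep False x) + f (prep True x)) / 2 \<partial>mu)"
    by (intro nn_integral_cong)
       (simp add: nn_integral_measure_pmf nn_integral_count_space_finite UNIV_bool prep_def
                  divide_ennreal_def distrib_left ac_simps)
  finally show ?thesis .
qed

lemma integrable_prep:
  fixes f :: "_ \<Rightarrow> 'b::{banach, second_countable_topology}"
  assumes "integrable mu f"
  shows "integrable mu (\<lambda>x. f (prep a x))"
proof -
  have [measurable]: "f \<in> borel_measurable mu" using assms by simp
  have half: "\<And>c::ennreal. 2 * (c / 2) = c"
    by (simp add: ennreal_times_divide mult.commute ennreal_mult_divide_eq)
  have "(\<integral>\<^sup>+x. norm (f (prep a x)) \<partial>mu)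
      \<le> (\<integral>\<^sup>+x. ennreal (norm (f (prep False x))) + norm (f (prep True x)) \<partial>mu)"
    by (intro nn_integral_mono) (cases a, auto)
  also have "\<dots> = (\<integral>\<^sup>+x. 2 * ((ennreal (norm (f (prep False x))) + norm (f (prep True x))) / 2) \<partial>mu)"
    by (simp only: half)
  also have "\<dots> = 2 * (\<integral>\<^sup>+x. (ennreal (norm (f (prep False x))) + norm (f (prep True x))) / 2 \<partial>mu)"
    by (rule nn_integral_cmult) measurable
  also have "\<dots> = 2 * (\<integral>\<^sup>+x. norm (f x) \<partial>mu)"
    using nn_integral_mu_split[of "\<lambda>x. ennreal (norm (f x))"] by simp
  also have "\<dots> < \<infinity>"
    using assms by (simp add: integrable_iff_bounded ennreal_mult_less_top)
  finally show ?thesis by (simp add: integrable_iff_bounded)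
qed

lemma integral_mu_split:
  fixes f :: "_ \<Rightarrow> 'b::{banach, second_countable_topology}"
  assumes "integrable mu f"
  shows "(\<integral>y. f y \<partial>mu) = (1/2) *\<^sub>R ((\<integral>x. f (prep False x) \<partial>mu) + (\<integral>x. f (prep True x) \<partial>mu))"
proof -
  interpret pair_sigma_finite coin mu by (rule pair_sigma_finite_coin_mu)
  have [measurable]: "f \<in> borel_measurable mu" using assms by simp
  have "integrable (coin \<Otimes>\<^sub>M mu) (\<lambda>(s, x). f (case_nat s x))"
    using assms integrable_distr_eq[OF case_nat_measurable, of f, unfolded distr_case_nat_mu]
    by (simp add: split_beta')
  moreover have "(\<integral>y. f y \<partial>mu) = (\<integral>p. (\<lambda>(s, x). f (case_nat s x)) p \<partial>(coin \<Otimes>\<^sub>M mu))"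
    by (subst (1) distr_case_nat_mu[symmetric], subst integral_distr) (auto simp: split_beta')
  ultimately have "(\<integral>y. f y \<partial>mu) = (\<integral>x. (\<integral>s. f (case_nat s x) \<partial>coin) \<partial>mu)"
    by (simp add: integral_snd)
  also have "\<dots> = (\<integral>x. (1/2) *\<^sub>R f (prep False x) + (1/2) *\<^sub>R f (prep True x) \<partial>mu)"
    by (intro Bochner_Integration.integral_cong refl)
       (simp add: integral_measure_pmf[where A=UNIV] UNIV_bool prep_def)
  also have "\<dots> = (1/2) *\<^sub>R ((\<integral>x. f (prep False x) \<partial>mu) + (\<integral>x. f (prep True x) \<partial>mu))"
    using integrable_prep[OF assms] by (simp add: scaleR_add_right)
  finally show ?thesis .
qed

lemma nn_integral_shift:
  assumes [measurable]: "f \<in> borel_measurable mu"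
  shows "(\<integral>\<^sup>+y. f (shift y) \<partial>mu) = (\<integral>\<^sup>+x. f x \<partial>mu)"
  by (subst nn_integral_mu_split) (simp_all add: mult_2[symmetric] mult.commute ennreal_mult_divide_eq)

lemma integrable_shift:
  fixes f :: "_ \<Rightarrow> 'b::{banach, second_countable_topology}"
  assumes "integrable mu f"
  shows "integrable mu (\<lambda>y. f (shift y))"
proof -
  have [measurable]: "f \<in> borel_measurable mu" using assms by simp
  have "(\<integral>\<^sup>+y. norm (f (shift y)) \<partial>mu) = (\<integral>\<^sup>+x. norm (f x) \<partial>mu)"
    by (rule nn_integral_shift) measurable
  then show ?thesis
    using assms by (simp add: integrable_iff_bounded)
qed

lemma integral_shift:
  fixes f :: "_ \<Rightarrow> 'b::{banach, second_countable_topology}"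
  assumes "integrable mu f"
  shows "(\<integral>y. f (shift y) \<partial>mu) = (\<integral>x. f x \<partial>mu)"
  using integral_mu_split[OF integrable_shift[OF assms]] by (simp add: scaleR_add_right[symmetric])

section \<open>Square-integrable functions\<close>

lemma cnj_measurable [measurable]: "cnj \<in> borel_measurable borel"
  by (intro borel_measurable_continuous_onI continuous_intros)

lemma L2_measurable: "f \<in> L2 \<Longrightarrow> f \<in> borel_measurable mu"
  by (simp add: L2_def)

lemma L2_integrable: "f \<in> L2 \<Longrightarrow> integrable mu (\<lambda>x. (cmod (f x))\<^sup>2)"
  by (simp add: L2_def)

lemma L2I: "f \<in> borel_measurable mu \<Longrightarrow> integrable mu (\<lambda>x. (cmod (f x))\<^sup>2) \<Longrightarrow> f \<in> L2"
  by (simp add: L2_def)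

lemma zero_L2: "(\<lambda>x. 0) \<in> L2"
  by (rule L2I) simp_all

lemma norm2_zero: "norm2 (\<lambda>x. 0) = 0"
  by (simp add: norm2_def)

lemma norm2_nonneg: "0 \<le> norm2 f"
  by (simp add: norm2_def)

lemma power2_norm2: "(norm2 f)\<^sup>2 = (\<integral>x. (cmod (f x))\<^sup>2 \<partial>mu)"
  by (simp add: norm2_def)

lemma cmod_diff_power2_le: "(cmod (a - b))\<^sup>2 \<le> 2 * (cmod a)\<^sup>2 + 2 * (cmod b)\<^sup>2"
proof -
  have "(cmod (a - b))\<^sup>2 \<le> (cmod a + cmod b)\<^sup>2"
    by (intro power_mono norm_triangle_ineq4) simp
  also have "\<dots> \<le> 2 * (cmod a)\<^sup>2 + 2 * (cmod b)\<^sup>2"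
    using sum_squares_bound[of "cmod a" "cmod b"] by (simp add: power2_sum)
  finally show ?thesis .
qed

lemma L2_diff:
  assumes "f \<in> L2" "g \<in> L2"
  shows "(\<lambda>x. f x - g x) \<in> L2"
proof (rule L2I)
  have [measurable]: "f \<in> borel_measurable mu" "g \<in> borel_measurable mu"
    using assms by (simp_all add: L2_measurable)
  show "(\<lambda>x. f x - g x) \<in> borel_measurable mu"
    by measurable
  show "integrable mu (\<lambda>x. (cmod (f x - g x))\<^sup>2)"
    by (rule Bochner_Integration.integrable_bound[where f = "\<lambda>x. 2 * (cmod (f x))\<^sup>2 + 2 * (cmod (g x))\<^sup>2"])
       (use assms in \<open>auto simp: L2_integrable cmod_diff_power2_le\<close>)
qed

lemma power2_norm2_diff_le:
  assumes "f \<in> L2" "g \<in> L2"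
  shows "(norm2 (\<lambda>x. f x - g x))\<^sup>2 \<le> 2 * (norm2 f)\<^sup>2 + 2 * (norm2 g)\<^sup>2"
proof -
  have "(\<integral>x. (cmod (f x - g x))\<^sup>2 \<partial>mu) \<le> (\<integral>x. 2 * (cmod (f x))\<^sup>2 + 2 * (cmod (g x))\<^sup>2 \<partial>mu)"
    using assms L2_diff[OF assms]
    by (intro integral_mono) (auto simp: L2_integrable cmod_diff_power2_le)
  then show ?thesis
    using assms by (simp add: power2_norm2 L2_integrable)
qed

lemma L2_mult:
  assumes "f \<in> L2"
  shows "(\<lambda>x. c * f x) \<in> L2"
proof (rule L2I)
  have [measurable]: "f \<in> borel_measurable mu"
    using assms by (rule L2_measurable)
  show "(\<lambda>x. c * f x) \<in> borel_measurable mu"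
    by measurable
  show "integrable mu (\<lambda>x. (cmod (c * f x))\<^sup>2)"
    using L2_integrable[OF assms] by (simp add: norm_mult power_mult_distrib)
qed

lemma norm2_mult: "norm2 (\<lambda>x. c * f x) = cmod c * norm2 f"
  by (simp add: norm2_def norm_mult power_mult_distrib real_sqrt_mult)

lemma integrable_inner2:
  assumes "f \<in> L2" "g \<in> L2"
  shows "integrable mu (\<lambda>x. f x * cnj (g x))"
proof (rule Bochner_Integration.integrable_bound)
  have [measurable]: "f \<in> borel_measurable mu" "g \<in> borel_measurable mu"
    using assms by (simp_all add: L2_measurable)
  show "(\<lambda>x. f x * cnj (g x)) \<in> borel_measurable mu"
    by measurable
  show "integrable mu (\<lambda>x. (cmod (f x))\<^sup>2 + (cmod (g x))\<^sup>2)"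
    using assms by (simp add: L2_integrable)
  have "cmod a * cmod b \<le> (cmod a)\<^sup>2 + (cmod b)\<^sup>2" for a b
  proof -
    have "2 * (cmod a * cmod b) \<le> (cmod a)\<^sup>2 + (cmod b)\<^sup>2"
      using sum_squares_bound[of "cmod a" "cmod b"] by (simp add: mult.assoc)
    moreover have "0 \<le> cmod a * cmod b" by simp
    ultimately show ?thesis by linarith
  qed
  then show "AE x in mu. norm (f x * cnj (g x)) \<le> norm ((cmod (f x))\<^sup>2 + (cmod (g x))\<^sup>2)"
    by (simp add: norm_mult)
qed

lemma inner2_cnj_commute: "inner2 f g = cnj (inner2 g f)"
proof -
  have "(\<lambda>x. f x * cnj (g x)) = (\<lambda>x. cnj (g x * cnj (f x)))"
    by (simp add: mult.commute)
  then show ?thesis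
    by (simp only: inner2_def Bochner_Integration.integral_cnj)
qed

lemma inner2_self: "inner2 f f = (norm2 f)\<^sup>2"
proof -
  have "(\<lambda>x. f x * cnj (f x)) = (\<lambda>x. complex_of_real ((cmod (f x))\<^sup>2))"
    by (rule ext) (rule complex_norm_square[symmetric])
  then show ?thesis
    by (simp only: inner2_def power2_norm2 integral_complex_of_real)
qed

lemma inner2_diff_left:
  assumes "f \<in> L2" "g \<in> L2" "h \<in> L2"
  shows "inner2 (\<lambda>x. f x - g x) h = inner2 f h - inner2 g h"
  using integrable_inner2[OF assms(1,3)] integrable_inner2[OF assms(2,3)]
  by (simp add: inner2_def left_diff_distrib)

lemma inner2_diff_right:
  assumes "f \<in> L2" "g \<in> L2" "h \<in> L2"
  shows "inner2 h (\<lambda>x. f x - g x) = inner2 h f - inner2 h g"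
  using integrable_inner2[OF assms(3,1)] integrable_inner2[OF assms(3,2)]
  by (simp add: inner2_def right_diff_distrib)

lemma inner2_mult_left: "inner2 (\<lambda>x. c * f x) g = c * inner2 f g"
  by (simp add: inner2_def mult.assoc)

lemma inner2_mult_right: "inner2 f (\<lambda>x. c * g x) = cnj c * inner2 f g"
  by (simp add: inner2_def ac_simps)

lemma ennreal_power2_norm2:
  assumes "f \<in> L2"
  shows "ennreal ((norm2 f)\<^sup>2) = (\<integral>\<^sup>+x. (ennreal (cmod (f x)))\<^sup>2 \<partial>mu)"
  using assms by (simp add: power2_norm2 ennreal_power nn_integral_eq_integral L2_integrable)

lemma norm_inner2_le:
  assumes "f \<in> L2" "g \<in> L2"
  shows "cmod (inner2 f g) \<le> norm2 f * norm2 g"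
proof -
  have [measurable]: "f \<in> borel_measurable mu" "g \<in> borel_measurable mu"
    using assms by (simp_all add: L2_measurable)
  let ?I = "\<integral>x. cmod (f x) * cmod (g x) \<partial>mu"
  have int: "integrable mu (\<lambda>x. cmod (f x) * cmod (g x))"
    using integrable_norm[OF integrable_inner2[OF assms]] by (simp add: norm_mult)
  have "ennreal ?I = (\<integral>\<^sup>+x. ennreal (cmod (f x) * cmod (g x)) \<partial>mu)"
    using int by (simp add: nn_integral_eq_integral)
  moreover have "0 \<le> ?I" by simp
  ultimately have "ennreal (?I\<^sup>2) = (\<integral>\<^sup>+x. ennreal (cmod (f x)) * ennreal (cmod (g x)) \<partial>mu)\<^sup>2"
    by (simp add: ennreal_mult flip: ennreal_power)
  also have "\<dots> \<le> (\<integral>\<^sup>+x. (ennreal (cmod (f x)))\<^sup>2 \<partial>mu) * (\<integral>\<^sup>+x. (ennreal (cmod (g x)))\<^sup>2 \<partial>mu)"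
    by (rule Cauchy_Schwarz_nn_integral) measurable
  also have "\<dots> = ennreal ((norm2 f)\<^sup>2) * ennreal ((norm2 g)\<^sup>2)"
    by (simp only: ennreal_power2_norm2 assms)
  also have "\<dots> = ennreal ((norm2 f * norm2 g)\<^sup>2)"
    by (simp add: power_mult_distrib ennreal_mult)
  finally have "?I\<^sup>2 \<le> (norm2 f * norm2 g)\<^sup>2"
    by simp
  then have "?I \<le> norm2 f * norm2 g"
    by (rule power2_le_imp_le) (simp add: norm2_nonneg)
  moreover have "cmod (inner2 f g) \<le> ?I"
    using integral_norm_bound[of mu "\<lambda>x. f x * cnj (g x)"] by (simp add: inner2_def norm_mult)
  ultimately show ?thesis by linarith
qed

section \<open>Transfer and Koopman operators\<close>

lemma koopman_L2:
  assumes "f \<in> L2"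
  shows "koopman f \<in> L2"
proof -
  have [measurable]: "f \<in> borel_measurable mu"
    using assms by (rule L2_measurable)
  have "(\<lambda>x. f (shift x)) \<in> borel_measurable mu"
    by measurable
  then show ?thesis
    unfolding koopman_def using integrable_shift[OF L2_integrable[OF assms]] by (rule L2I)
qed

lemma norm2_koopman:
  assumes "f \<in> L2"
  shows "norm2 (koopman f) = norm2 f"
  using integral_shift[OF L2_integrable[OF assms]] by (simp add: norm2_def koopman_def)

lemma ruelle_L2:
  assumes "f \<in> L2"
  shows "ruelle f \<in> L2"
proof (rule L2I)
  have [measurable]: "f \<in> borel_measurable mu"
    using assms by (rule L2_measurable)
  show "ruelle f \<in> borel_measurable mu"
    unfolding ruelle_def by measurable
  show "integrable mu (\<lambda>x. (cmod (ruelle f x))\<^sup>2)"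
  proof (rule Bochner_Integration.integrable_bound)
    show "integrable mu (\<lambda>x. ((cmod (f (prep False x)))\<^sup>2 + (cmod (f (prep True x)))\<^sup>2) / 2)"
      using integrable_prep[OF L2_integrable[OF assms]] by simp
    show "(\<lambda>x. (cmod (ruelle f x))\<^sup>2) \<in> borel_measurable mu"
      unfolding ruelle_def by measurable
    have "(cmod ((a + b) / 2))\<^sup>2 \<le> ((cmod a)\<^sup>2 + (cmod b)\<^sup>2) / 2" for a b :: complex
      using cmod_diff_power2_le[of a "- b"] by (simp add: norm_divide power_divide)
    then show "AE x in mu. norm ((cmod (ruelle f x))\<^sup>2)
        \<le> norm (((cmod (f (prep False x)))\<^sup>2 + (cmod (f (prep True x)))\<^sup>2) / 2)"
      by (simp add: ruelle_def)
  qed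
qed

lemma inner2_ruelle_koopman:
  assumes "u \<in> L2" "v \<in> L2"
  shows "inner2 (ruelle u) v = inner2 u (koopman v)"
proof -
  have int: "integrable mu (\<lambda>y. u y * cnj (koopman v y))"
    using integrable_inner2[OF assms(1) koopman_L2[OF assms(2)]] .
  have "inner2 (ruelle u) v
      = (\<integral>x. (1/2) *\<^sub>R (u (prep False x) * cnj (v x)) + (1/2) *\<^sub>R (u (prep True x) * cnj (v x)) \<partial>mu)"
    unfolding inner2_def ruelle_def
    by (intro Bochner_Integration.integral_cong refl) (simp add: scaleR_conv_of_real field_simps)
  also have "\<dots> = (1/2) *\<^sub>R ((\<integral>x. u (prep False x) * cnj (v x) \<partial>mu) + (\<integral>x. u (prep True x) * cnj (v x) \<partial>mu))"
    using integrable_prep[OF int] by (simp add: koopman_def scaleR_add_right)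
  also have "\<dots> = inner2 u (koopman v)"
    using integral_mu_split[OF int] by (simp add: inner2_def koopman_def)
  finally show ?thesis .
qed

lemma comm_L2:
  assumes "T \<in> L2 \<rightarrow> L2" "A \<in> L2 \<rightarrow> L2"
  shows "comm T A \<in> L2 \<rightarrow> L2"
  using assms by (auto simp: comm_def intro!: L2_diff)

section \<open>Operators that are minus each other's adjoint\<close>

definition neg_adjoint :: "(fn \<Rightarrow> fn) \<Rightarrow> (fn \<Rightarrow> fn) \<Rightarrow> bool" where
  "neg_adjoint Y X \<longleftrightarrow> Y \<in> L2 \<rightarrow> L2 \<and> X \<in> L2 \<rightarrow> L2 \<and>
     (\<forall>f\<in>L2. \<forall>g\<in>L2. inner2 (Y f) g = - inner2 f (X g))"

lemma neg_adjoint_sym: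
  assumes "neg_adjoint Y X"
  shows "neg_adjoint X Y"
  unfolding neg_adjoint_def
proof (intro conjI ballI)
  fix f g assume "f \<in> L2" "g \<in> L2"
  then have YX: "inner2 (Y g) f = - inner2 g (X f)"
    using assms by (simp add: neg_adjoint_def)
  have "inner2 (X f) g = cnj (inner2 g (X f))"
    by (rule inner2_cnj_commute)
  also have "\<dots> = - cnj (inner2 (Y g) f)"
    using YX by simp
  also have "\<dots> = - inner2 f (Y g)"
    by (simp flip: inner2_cnj_commute)
  finally show "inner2 (X f) g = - inner2 f (Y g)" .
qed (use assms in \<open>simp_all add: neg_adjoint_def\<close>)

lemma neg_adjoint_comm:
  assumes T: "T \<in> L2 \<rightarrow> L2" and S: "S \<in> L2 \<rightarrow> L2" and A: "A \<in> L2 \<rightarrow> L2"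
    and adj: "\<And>u v. u \<in> L2 \<Longrightarrow> v \<in> L2 \<Longrightarrow> inner2 (T u) v = inner2 u (S v)"
    and sa: "self_adjoint A"
  shows "neg_adjoint (comm T A) (comm S A)"
  unfolding neg_adjoint_def
proof (intro conjI ballI)
  fix f g assume f: "f \<in> L2" and g: "g \<in> L2"
  have sa': "inner2 (A u) v = inner2 u (A v)" if "u \<in> L2" "v \<in> L2" for u v
    using sa that by (simp add: self_adjoint_def)
  have "inner2 (comm T A f) g = inner2 (T (A f)) g - inner2 (A (T f)) g"
    unfolding comm_def using T A f g by (intro inner2_diff_left) auto
  also have "\<dots> = inner2 f (A (S g)) - inner2 f (S (A g))"
    using T S A f g by (simp add: adj sa' Pi_iff)
  also have "\<dots> = - inner2 f (comm S A g)"
    unfolding comm_def using S A f g by (subst inner2_diff_right) auto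
  finally show "inner2 (comm T A f) g = - inner2 f (comm S A g)" .
qed (use T S A comm_L2 in auto)

definition opnorm_set :: "(fn \<Rightarrow> fn) \<Rightarrow> real set" where
  "opnorm_set T = {norm2 (T f) | f. f \<in> L2 \<and> norm2 f \<le> 1}"

lemma opnorm_eq_Sup: "opnorm T = Sup (opnorm_set T)"
  by (simp add: opnorm_def opnorm_set_def)

lemma opnorm_set_nonempty: "opnorm_set T \<noteq> {}"
  using zero_L2 by (force simp: opnorm_set_def norm2_zero)

lemma norm2_le_opnorm:
  assumes "bdd_above (opnorm_set T)" "f \<in> L2" "norm2 f \<le> 1"
  shows "norm2 (T f) \<le> opnorm T"
  unfolding opnorm_eq_Sup using assms by (intro cSup_upper) (auto simp: opnorm_set_def)

lemma opnorm_nonneg: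
  assumes "bdd_above (opnorm_set T)"
  shows "0 \<le> opnorm T"
  using norm2_le_opnorm[OF assms zero_L2] norm2_nonneg[of "T (\<lambda>x. 0)"] by (simp add: norm2_zero)

lemma neg_adjoint_dominated:
  assumes adj: "neg_adjoint Y X" and f: "f \<in> L2"
  shows "\<exists>g\<in>L2. norm2 g \<le> 1 \<and> norm2 (Y f) \<le> norm2 f * norm2 (X g)"
proof (cases "norm2 (Y f) = 0")
  case True
  then have "norm2 (Y f) \<le> norm2 f * norm2 (X (\<lambda>x. 0))"
    by (simp add: norm2_nonneg)
  then show ?thesis
    using zero_L2 by (intro bexI[of _ "\<lambda>x. 0"] conjI) (simp_all add: norm2_zero)
next
  case False
  define n where "n = norm2 (Y f)"
  have n: "0 < n" using False norm2_nonneg[of "Y f"] by (simp add: n_def)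
  have Yf: "Y f \<in> L2" using adj f by (auto simp: neg_adjoint_def)
  define g where "g = (\<lambda>x. complex_of_real (1 / n) * Y f x)"
  have g: "g \<in> L2" unfolding g_def using Yf by (rule L2_mult)
  have g1: "norm2 g = 1"
    unfolding g_def norm2_mult using n by (simp add: n_def norm_divide)
  have "inner2 (Y f) g = n"
    unfolding g_def inner2_mult_right inner2_self using n by (simp add: n_def power2_eq_square)
  then have "- inner2 f (X g) = n"
    using adj f g by (simp add: neg_adjoint_def)
  then have "n = cmod (inner2 f (X g))"
    using n by (metis abs_of_pos norm_minus_cancel norm_of_real)
  also have "\<dots> \<le> norm2 f * norm2 (X g)"
    using norm_inner2_le[OF f] adj g by (auto simp: neg_adjoint_def)
  finally have "norm2 (Y f) \<le> norm2 f * norm2 (X g)"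
    by (simp add: n_def)
  with g g1 show ?thesis
    by (intro bexI[of _ g] conjI) simp_all
qed

text \<open>No boundedness is needed: on \<open>real\<close>, \<open>Sup\<close> of an unbounded set is a junk value
  that only depends on the set of upper bounds, which cofinal sets share.\<close>
lemma Sup_real_eq_cofinal:
  fixes S T :: "real set"
  assumes "\<forall>a\<in>S. \<exists>b\<in>T. a \<le> b" and "\<forall>b\<in>T. \<exists>a\<in>S. b \<le> a"
  shows "Sup S = Sup T"
proof -
  have "(\<lambda>z. \<forall>x\<in>S. x \<le> z) = (\<lambda>z. \<forall>x\<in>T. x \<le> z)"
    using assms by (fastforce intro: order_trans)
  then show ?thesis unfolding Sup_real_def by simp
qed

lemma opnorm_set_neg_adjoint_cofinal:
  assumes "neg_adjoint Y X"
  shows "\<forall>a\<in>opnorm_set Y. \<exists>b\<in>opnorm_set X. a \<le> b"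
proof
  fix a assume "a \<in> opnorm_set Y"
  then obtain f where f: "f \<in> L2" "norm2 f \<le> 1" and a: "a = norm2 (Y f)"
    by (auto simp: opnorm_set_def)
  obtain g where g: "g \<in> L2" "norm2 g \<le> 1" and le: "norm2 (Y f) \<le> norm2 f * norm2 (X g)"
    using neg_adjoint_dominated[OF assms f(1)] by blast
  have "norm2 f * norm2 (X g) \<le> norm2 (X g)"
    using f(2) norm2_nonneg[of f] norm2_nonneg[of "X g"] by (simp add: mult_left_le_one_le)
  then have "a \<le> norm2 (X g)"
    using a le by linarith
  moreover have "norm2 (X g) \<in> opnorm_set X"
    using g by (auto simp: opnorm_set_def)
  ultimately show "\<exists>b\<in>opnorm_set X. a \<le> b" by blast
qed

lemma opnorm_neg_adjoint:
  assumes "neg_adjoint Y X"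
  shows "opnorm Y = opnorm X"
  unfolding opnorm_eq_Sup
  using assms neg_adjoint_sym[OF assms]
  by (intro Sup_real_eq_cofinal opnorm_set_neg_adjoint_cofinal)

lemma norm2_neg_adjoint_le:
  assumes adj: "neg_adjoint Y X" and bdd: "bdd_above (opnorm_set X)" and f: "f \<in> L2"
  shows "norm2 (Y f) \<le> norm2 f * opnorm X"
proof -
  obtain g where g: "g \<in> L2" "norm2 g \<le> 1" and le: "norm2 (Y f) \<le> norm2 f * norm2 (X g)"
    using neg_adjoint_dominated[OF adj f] by blast
  have "norm2 f * norm2 (X g) \<le> norm2 f * opnorm X"
    using norm2_le_opnorm[OF bdd g] norm2_nonneg[of f] by (rule mult_left_mono)
  with le show ?thesis by linarith
qed

lemma bdd_above_opnorm_set_neg_adjoint: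
  assumes adj: "neg_adjoint Y X" and bdd: "bdd_above (opnorm_set X)"
  shows "bdd_above (opnorm_set Y)"
proof (rule bdd_aboveI)
  fix a assume "a \<in> opnorm_set Y"
  then obtain f where f: "f \<in> L2" "norm2 f \<le> 1" and a: "a = norm2 (Y f)"
    by (auto simp: opnorm_set_def)
  have "norm2 f * opnorm X \<le> opnorm X"
    using f(2) norm2_nonneg[of f] opnorm_nonneg[OF bdd] by (simp add: mult_left_le_one_le)
  then show "a \<le> opnorm X"
    using norm2_neg_adjoint_le[OF adj bdd f(1)] a by linarith
qed

section \<open>The Dirac commutator and rank-one projections\<close>

lemma commH_dirac_piop:
  "commH dirac (piop A) = (\<lambda>p. (comm koopman A (snd p), comm ruelle A (fst p)))"
  by (simp add: commH_def dirac_def piop_def comm_def)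

lemma normH_antidiagonal_le:
  assumes adj: "neg_adjoint Y X" and bdd: "bdd_above (opnorm_set X)" and "f \<in> L2" "g \<in> L2"
  shows "normH (X g, Y f) \<le> opnorm X * normH (f, g)"
proof -
  have adj': "neg_adjoint X Y"
    by (rule neg_adjoint_sym[OF adj])
  have N: "opnorm Y = opnorm X"
    by (rule opnorm_neg_adjoint[OF adj])
  have "norm2 (X g) \<le> norm2 g * opnorm X"
    using norm2_neg_adjoint_le[OF adj' bdd_above_opnorm_set_neg_adjoint[OF adj bdd] \<open>g \<in> L2\<close>] N
    by simp
  then have X: "(norm2 (X g))\<^sup>2 \<le> (opnorm X)\<^sup>2 * (norm2 g)\<^sup>2"
    using norm2_nonneg[of "X g"] by (metis power_mono power_mult_distrib mult.commute)
  have "norm2 (Y f) \<le> norm2 f * opnorm X"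
    by (rule norm2_neg_adjoint_le[OF adj bdd \<open>f \<in> L2\<close>])
  then have Y: "(norm2 (Y f))\<^sup>2 \<le> (opnorm X)\<^sup>2 * (norm2 f)\<^sup>2"
    using norm2_nonneg[of "Y f"] by (metis power_mono power_mult_distrib mult.commute)
  have "normH (X g, Y f) \<le> sqrt ((opnorm X)\<^sup>2 * ((norm2 f)\<^sup>2 + (norm2 g)\<^sup>2))"
    unfolding normH_def using X Y by (simp add: distrib_left)
  also have "\<dots> = opnorm X * normH (f, g)"
    using opnorm_nonneg[OF bdd] by (simp add: normH_def real_sqrt_mult)
  finally show ?thesis .
qed

lemma opnormH_antidiagonal:
  assumes adj: "neg_adjoint Y X" and bdd: "bdd_above (opnorm_set X)"
  shows "opnormH (\<lambda>p. (X (snd p), Y (fst p))) = opnorm X"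
proof -
  define H where "H = {normH (X (snd p), Y (fst p)) | p. fst p \<in> L2 \<and> snd p \<in> L2 \<and> normH p \<le> 1}"
  have H_le: "e \<le> opnorm X" if "e \<in> H" for e
  proof -
    obtain p where p: "fst p \<in> L2" "snd p \<in> L2" "normH p \<le> 1"
      and e: "e = normH (X (snd p), Y (fst p))"
      using \<open>e \<in> H\<close> unfolding H_def by blast
    have "e \<le> opnorm X * normH p"
      using normH_antidiagonal_le[OF adj bdd p(1,2)] e by simp
    also have "\<dots> \<le> opnorm X"
      using p(3) opnorm_nonneg[OF bdd] by (simp add: mult_left_le)
    finally show ?thesis .
  qed
  have zero_H: "normH (X g, Y (\<lambda>x. 0)) \<in> H" if "g \<in> L2" "norm2 g \<le> 1" for g
  proof -
    have "normH ((\<lambda>x. 0), g) \<le> 1"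
      using that norm2_nonneg[of g] by (simp add: normH_def norm2_zero)
    then show ?thesis
      unfolding H_def using that zero_L2 by fastforce
  qed
  have "Sup H \<le> opnorm X"
    using H_le zero_H[OF zero_L2] by (intro cSup_least) (auto simp: norm2_zero)
  moreover have "opnorm X \<le> Sup H"
    unfolding opnorm_eq_Sup
  proof (rule cSup_mono[OF opnorm_set_nonempty])
    show "bdd_above H"
      by (rule bdd_aboveI) (rule H_le)
    fix b assume "b \<in> opnorm_set X"
    then obtain g where g: "g \<in> L2" "norm2 g \<le> 1" and b: "b = norm2 (X g)"
      by (auto simp: opnorm_set_def)
    have "b \<le> normH (X g, Y (\<lambda>x. 0))"
      using b norm2_nonneg[of "X g"] by (simp add: normH_def real_le_rsqrt)
    with zero_H[OF g] show "\<exists>a\<in>H. b \<le> a" by blast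
  qed
  ultimately show ?thesis
    by (simp add: opnormH_def H_def)
qed

lemma bdd_above_opnorm_set_comm_koopman:
  assumes A: "A \<in> L2 \<rightarrow> L2" and bound: "\<And>f. f \<in> L2 \<Longrightarrow> norm2 (A f) \<le> C * norm2 f"
  shows "bdd_above (opnorm_set (comm koopman A))"
proof (rule bdd_aboveI)
  fix a assume "a \<in> opnorm_set (comm koopman A)"
  then obtain g where g: "g \<in> L2" "norm2 g \<le> 1" and a: "a = norm2 (comm koopman A g)"
    by (auto simp: opnorm_set_def)
  have small: "(norm2 (A f))\<^sup>2 \<le> C\<^sup>2" if "f \<in> L2" "norm2 f \<le> 1" for f
  proof -
    have "norm2 (A f) \<le> \<bar>C\<bar> * norm2 f"
      using bound[OF that(1)] mult_right_mono[OF abs_ge_self[of C] norm2_nonneg[of f]] by linarith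
    also have "\<dots> \<le> \<bar>C\<bar>"
      using that(2) norm2_nonneg[of f] by (simp add: mult_left_le)
    finally have "(norm2 (A f))\<^sup>2 \<le> \<bar>C\<bar>\<^sup>2"
      by (rule power_mono[OF _ norm2_nonneg])
    then show ?thesis
      by simp
  qed
  have Ag: "A g \<in> L2" and Kg: "koopman g \<in> L2"
    using A g koopman_L2 by auto
  have "a\<^sup>2 \<le> 2 * (norm2 (koopman (A g)))\<^sup>2 + 2 * (norm2 (A (koopman g)))\<^sup>2"
    unfolding a comm_def using A Ag Kg by (intro power2_norm2_diff_le koopman_L2) auto
  also have "\<dots> \<le> 2 * C\<^sup>2 + 2 * C\<^sup>2"
    using small[OF g] small[OF Kg] g(2) by (simp add: norm2_koopman Ag g(1))
  also have "\<dots> = (2 * \<bar>C\<bar>)\<^sup>2"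
    by (simp add: power_mult_distrib)
  finally show "a \<le> 2 * \<bar>C\<bar>"
    by (rule power2_le_imp_le) simp
qed

lemma proj_L2:
  assumes "\<psi> \<in> L2"
  shows "proj \<psi> \<in> L2 \<rightarrow> L2"
  using assms by (auto simp: proj_def intro: L2_mult)

lemma norm2_proj_le:
  assumes "\<psi> \<in> L2" "f \<in> L2"
  shows "norm2 (proj \<psi> f) \<le> (norm2 \<psi>)\<^sup>2 * norm2 f"
proof -
  have "norm2 (proj \<psi> f) = cmod (inner2 f \<psi>) * norm2 \<psi>"
    by (simp add: proj_def norm2_mult)
  also have "\<dots> \<le> norm2 f * norm2 \<psi> * norm2 \<psi>"
    using assms by (intro mult_right_mono norm_inner2_le) (auto simp: norm2_nonneg)
  finally show ?thesis
    by (simp add: power2_eq_square ac_simps)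
qed

lemma self_adjoint_proj: "self_adjoint (proj \<psi>)"
  unfolding self_adjoint_def proj_def inner2_mult_left inner2_mult_right
  by (metis inner2_cnj_commute mult.commute)

theorem lemma2p1:
  shows "(\<forall>A. bounded_op A \<and> self_adjoint A \<longrightarrow>
            opnorm (comm ruelle A) = opnorm (comm koopman A)) \<and>
         (\<forall>\<psi>\<in>L2. norm2 \<psi> = 1 \<longrightarrow>
            opnorm (comm ruelle (proj \<psi>)) = opnorm (comm koopman (proj \<psi>)) \<and>
            opnormH (commH dirac (piop (proj \<psi>))) =
              max (opnorm (comm koopman (proj \<psi>))) (opnorm (comm ruelle (proj \<psi>))) \<and>
            max (opnorm (comm koopman (proj \<psi>))) (opnorm (comm ruelle (proj \<psi>))) =
              opnorm (comm koopman (proj \<psi>)))"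
proof -
  have neg_adj: "neg_adjoint (comm ruelle A) (comm koopman A)"
    if "A \<in> L2 \<rightarrow> L2" "self_adjoint A" for A
    using that ruelle_L2 koopman_L2 inner2_ruelle_koopman by (intro neg_adjoint_comm) auto
  have opnorm_eq: "opnorm (comm ruelle A) = opnorm (comm koopman A)"
    if "A \<in> L2 \<rightarrow> L2" "self_adjoint A" for A
    by (rule opnorm_neg_adjoint[OF neg_adj[OF that]])
  have dirac: "opnormH (commH dirac (piop (proj \<psi>))) = opnorm (comm koopman (proj \<psi>))"
    if "\<psi> \<in> L2" "norm2 \<psi> = 1" for \<psi>
    unfolding commH_dirac_piop
    using that proj_L2 self_adjoint_proj norm2_proj_le[OF that(1)]
    by (intro opnormH_antidiagonal neg_adj bdd_above_opnorm_set_comm_koopman[where C = 1]) auto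
  show ?thesis
    using opnorm_eq[OF proj_L2 self_adjoint_proj] dirac by (auto simp: bounded_op_def opnorm_eq)
qed

end
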